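(* Let $R\subseteq S$ be an extension of commutative rings such that $S$ is well-centered on $R$. If $M$ is a maximal ideal of $R$ with $MS\neq S$, then $MS$ is a maximal ideal of $S$.
   Context: All rings are commutative with identity. An extension ring $S$ of $R$ is well-centered on $R$ if for each $s\in S$ there is a unit $u$ of $S$ with $us\in R$. *)

theory Defs
  imports "HOL-Algebra.Algebra"
begin

definition well_centered :: "('a, 'b) ring_scheme \<Rightarrow> 'a set \<Rightarrow> bool" where
  "well_centered S R \<longleftrightarrow> (\<forall>s \<in> carrier S. \<exists>u \<in> Units S. u \<otimes>\<^bsub>S\<^esub> s \<in> R)"

end

theory Submission
  imports Defs
begin

text \<open>In an extension well-centered on \<open>R\<close>, every ideal \<open>J\<close> of \<open>S\<close> is generated by its
  contraction \<open>J \<inter> R\<close>, because each element of \<open>J\<close> is a unit multiple of an element of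
  \<open>J \<inter> R\<close>. An ideal \<open>J \<supseteq> MS\<close> of \<open>S\<close> contracts to an ideal of \<open>R\<close> containing \<open>M\<close>, so
  by maximality \<open>J \<inter> R = M\<close>, whence \<open>J = MS\<close>, or \<open>J \<inter> R = R\<close>, whence \<open>1 \<in> J\<close>.\<close>

lemma (in ring) ideal_Int_subring:
  assumes "subring K R" and "ideal J R"
  shows "ideal (J \<inter> K) (R\<lparr>carrier := K\<rparr>)"
proof -
  have "id \<in> ring_hom (R\<lparr>carrier := K\<rparr>) R"
    using subringE(1)[OF assms(1)] by (auto intro!: ring_hom_memI)
  then interpret incl: ring_hom_ring "R\<lparr>carrier := K\<rparr>" R id
    by (rule ring_hom_ringI2[OF subring_is_ring[OF assms(1)] ring_axioms])
  have "ideal {r \<in> K. id r \<in> J} (R\<lparr>carrier := K\<rparr>)"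
    using incl.ideal_vimage[OF assms(2)] by simp
  moreover have "{r \<in> K. id r \<in> J} = J \<inter> K" by auto
  ultimately show ?thesis by simp
qed

lemma (in ring) well_centered_ideal_eq_genideal_Int:
  assumes "well_centered R K" and "ideal J R"
  shows "J = Idl (J \<inter> K)"
proof
  interpret J: ideal J R by fact
  have JK_carr: "J \<inter> K \<subseteq> carrier R" using J.a_subset by blast
  show "Idl (J \<inter> K) \<subseteq> J"
    using genideal_minimal[OF assms(2)] by blast
  show "J \<subseteq> Idl (J \<inter> K)"
  proof
    fix s assume s: "s \<in> J"
    then have s_carr: "s \<in> carrier R" by (rule J.Icarr)
    then obtain u where u: "u \<in> Units R" "u \<otimes> s \<in> K"
      using assms(1) unfolding well_centered_def by blast
    have "u \<otimes> s \<in> J" using J.I_l_closed[OF s] u(1) by blast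
    with u(2) have "u \<otimes> s \<in> Idl (J \<inter> K)"
      using genideal_self[OF JK_carr] by blast
    then have "inv u \<otimes> (u \<otimes> s) \<in> Idl (J \<inter> K)"
      using ideal.I_l_closed[OF genideal_ideal[OF JK_carr]] u(1) by blast
    moreover have "inv u \<otimes> (u \<otimes> s) = s"
      using u(1) s_carr by (simp add: m_assoc[symmetric] Units_closed)
    ultimately show "s \<in> Idl (J \<inter> K)" by simp
  qed
qed
theorem proposition3p2:
  fixes S :: "('a, 'b) ring_scheme" and R M :: "'a set"
  assumes "cring S"
    and "subring R S"
    and "well_centered S R"
    and "maximalideal M (S\<lparr>carrier := R\<rparr>)"
    and "Idl\<^bsub>S\<^esub> M \<noteq> carrier S"
  shows "maximalideal (Idl\<^bsub>S\<^esub> M) S"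
proof -
  interpret S: cring S by fact
  interpret M: maximalideal M "S\<lparr>carrier := R\<rparr>" by fact
  have M_carr: "M \<subseteq> carrier S" using M.a_subset subringE(1)[OF assms(2)] by auto
  show ?thesis
  proof (rule maximalidealI[OF S.genideal_ideal[OF M_carr]])
    show "carrier S \<noteq> Idl\<^bsub>S\<^esub> M" using assms(5) by auto
  next
    fix J assume J: "ideal J S" "Idl\<^bsub>S\<^esub> M \<subseteq> J"
    have "M \<subseteq> J \<inter> R" using J(2) S.genideal_self[OF M_carr] M.a_subset by auto
    then have "J \<inter> R = M \<or> J \<inter> R = R"
      using M.I_maximal[OF S.ideal_Int_subring[OF assms(2) J(1)]] by auto
    moreover have "J = Idl\<^bsub>S\<^esub> (J \<inter> R)"
      using S.well_centered_ideal_eq_genideal_Int[OF assms(3) J(1)] .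
    moreover have "J \<inter> R = R \<Longrightarrow> J = carrier S"
      using subringE(3)[OF assms(2)] ideal.one_imp_carrier[OF J(1)] by blast
    ultimately show "J = Idl\<^bsub>S\<^esub> M \<or> J = carrier S" by auto
  qed
qed

end
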